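(* There is an absolute constant $c>0$ such that for every instance $I$ of continuous BGT with $n\ge2$ and growth rates normalized so that $\sum_i h_i=1$, the schedule produced by Algorithm 3 satisfies $\mathrm{MH}\le c\cdot\log_2 n\cdot\mathrm{OPT}(I)$. Algorithm 3: let $s=\lceil 2\log_2 n\rceil$, $V_0=\{v_j: h_j\le n^{-2}\}$, enumerated as $v'_0,\dots,v'_{\ell-1}$, and for $i=1,\dots,s$, $V_i=\{v_j: 2^{i-1}n^{-2}<h_j\le 2^i n^{-2}\}$. For each nonempty $V_i$ ($i\ge1$) compute a minimum spanning tree $T_i$ of $V_i$ and a directed closed Euler tour $C_i$ of $T_i$ (a cyclic walk traversing each edge twice), marking an arbitrary point of $C_i$ as its "last visited point". Set $j=0$. The robot starts at $v_1$ and repeats forever: (a) for $i=1,\dots,s$ with $V_i\ne\emptyset$: travel directly to the last visited point of $C_i$; then, if $|V_i|\ge2$, walk along $C_i$ in the tour direction, stopping at the first tour vertex at which the distance covered along $C_i$ in this phase is at least $D$, and make it the new last visited point of $C_i$; (b) if $V_0\ne\emptyset$, travel directly to $v'_j$ and set $j\leftarrow (j+1)\bmod \ell$. Bamboos are cut whenever the robot is at their point.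
   Context: Continuous BGT: bamboos at points $V=\{v_1,\dots,v_n\}$, growth rates $h_1\ge\dots\ge h_n>0$, initial heights $0$; symmetric travel times $t_{i,j}>0$ ($i\ne j$) satisfying the triangle inequality. The robot starts at $v_1$ at time $0$, moving from $v_i$ to $v_j$ takes time $t_{i,j}$, and the bamboo at a point is cut instantaneously to $0$ whenever the robot is there. Height of $b_i$ at time $t$ = $h_i$ times time since its last cut (or since $0$). $\mathrm{MH}$ = supremum of all heights over all times; $\mathrm{OPT}(I)$ = infimum of $\mathrm{MH}$ over all robot walks. $D=\max_{i,j}t_{i,j}$. *)

theory Defs
  imports Complex_Main "HOL-Library.Multiset" "HOL-Library.Stream" "HOL-Library.Extended_Real"
begin

(* Points v_1..v_n are encoded as 0..n-1 (v_1 = 0).  h i = growth rate of the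
   bamboo at point i, t i j = travel time between i and j (only used for i ~= j). *)

definition bgt_instance :: "nat \<Rightarrow> (nat \<Rightarrow> real) \<Rightarrow> (nat \<Rightarrow> nat \<Rightarrow> real) \<Rightarrow> bool" where
  "bgt_instance n h t \<longleftrightarrow>
     (\<forall>i j. i \<le> j \<longrightarrow> j < n \<longrightarrow> h j \<le> h i) \<and>
     (\<forall>i<n. 0 < h i) \<and>
     (\<forall>i<n. \<forall>j<n. i \<noteq> j \<longrightarrow> 0 < t i j \<and> t i j = t j i) \<and>
     (\<forall>i<n. \<forall>j<n. \<forall>k<n. i \<noteq> j \<and> j \<noteq> k \<and> i \<noteq> k \<longrightarrow> t i k \<le> t i j + t j k)"

definition tt :: "(nat \<Rightarrow> nat \<Rightarrow> real) \<Rightarrow> nat \<Rightarrow> nat \<Rightarrow> real" where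
  "tt t i j = (if i = j then 0 else t i j)"

definition Dmax :: "nat \<Rightarrow> (nat \<Rightarrow> nat \<Rightarrow> real) \<Rightarrow> real" where
  "Dmax n t = Max {t i j | i j. i < n \<and> j < n \<and> i \<noteq> j}"

definition robot_walks :: "nat \<Rightarrow> (nat \<Rightarrow> nat) set" where
  "robot_walks n = {w. w 0 = 0 \<and> (\<forall>k. w k < n)}"

definition arrival :: "(nat \<Rightarrow> nat \<Rightarrow> real) \<Rightarrow> (nat \<Rightarrow> nat) \<Rightarrow> nat \<Rightarrow> real" where
  "arrival t w k = (\<Sum>m<k. tt t (w m) (w (Suc m)))"

definition last_cut :: "(nat \<Rightarrow> nat \<Rightarrow> real) \<Rightarrow> (nat \<Rightarrow> nat) \<Rightarrow> nat \<Rightarrow> real \<Rightarrow> real" where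
  "last_cut t w i \<tau> = Sup ({0} \<union> {arrival t w k | k. w k = i \<and> arrival t w k \<le> \<tau>})"

definition height :: "(nat \<Rightarrow> real) \<Rightarrow> (nat \<Rightarrow> nat \<Rightarrow> real) \<Rightarrow> (nat \<Rightarrow> nat) \<Rightarrow> nat \<Rightarrow> real \<Rightarrow> real" where
  "height h t w i \<tau> = h i * (\<tau> - last_cut t w i \<tau>)"

definition MH :: "nat \<Rightarrow> (nat \<Rightarrow> real) \<Rightarrow> (nat \<Rightarrow> nat \<Rightarrow> real) \<Rightarrow> (nat \<Rightarrow> nat) \<Rightarrow> ereal" where
  "MH n h t w = (SUP p \<in> {..<n} \<times> {0::real..}. ereal (height h t w (fst p) (snd p)))"

definition OPT :: "nat \<Rightarrow> (nat \<Rightarrow> real) \<Rightarrow> (nat \<Rightarrow> nat \<Rightarrow> real) \<Rightarrow> ereal" where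
  "OPT n h t = (INF w \<in> robot_walks n. MH n h t w)"

definition alg_s :: "nat \<Rightarrow> nat" where
  "alg_s n = nat \<lceil>2 * log 2 (real n)\<rceil>"

definition cls0 :: "nat \<Rightarrow> (nat \<Rightarrow> real) \<Rightarrow> nat set" where
  "cls0 n h = {j. j < n \<and> h j \<le> 1 / (real n)^2}"

definition cls :: "nat \<Rightarrow> (nat \<Rightarrow> real) \<Rightarrow> nat \<Rightarrow> nat set" where
  "cls n h i = {j. j < n \<and> 2^(i-1) / (real n)^2 < h j \<and> h j \<le> 2^i / (real n)^2}"

definition spanning_tree :: "nat set \<Rightarrow> (nat \<times> nat) set \<Rightarrow> bool" where
  "spanning_tree V E \<longleftrightarrow>
     E \<subseteq> {(a,b). a \<in> V \<and> b \<in> V \<and> a < b} \<and> card E + 1 = card V \<and>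
     (\<forall>a\<in>V. \<forall>b\<in>V. (a,b) \<in> (E \<union> E\<inverse>)\<^sup>*)"

definition tree_weight :: "(nat \<Rightarrow> nat \<Rightarrow> real) \<Rightarrow> (nat \<times> nat) set \<Rightarrow> real" where
  "tree_weight t E = (\<Sum>(a,b)\<in>E. t a b)"

definition min_spanning_tree :: "(nat \<Rightarrow> nat \<Rightarrow> real) \<Rightarrow> nat set \<Rightarrow> (nat \<times> nat) set \<Rightarrow> bool" where
  "min_spanning_tree t V E \<longleftrightarrow> spanning_tree V E \<and>
     (\<forall>E'. spanning_tree V E' \<longrightarrow> tree_weight t E \<le> tree_weight t E')"

(* closed directed Euler tour of the doubled tree, as a cyclic list of points *)
definition euler_tour :: "nat set \<Rightarrow> (nat \<times> nat) set \<Rightarrow> nat list \<Rightarrow> bool" where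
  "euler_tour V E cs \<longleftrightarrow>
     (if card V = 1 then cs = [the_elem V]
      else cs \<noteq> [] \<and>
        mset (map (\<lambda>k. (cs ! k, cs ! ((k + 1) mod length cs))) [0..<length cs])
          = mset_set (E \<union> E\<inverse>))"

definition tour_len :: "(nat \<Rightarrow> nat \<Rightarrow> real) \<Rightarrow> nat list \<Rightarrow> nat \<Rightarrow> nat \<Rightarrow> real" where
  "tour_len t cs p r =
     (\<Sum>q<r. tt t (cs ! ((p + q) mod length cs)) (cs ! ((p + q + 1) mod length cs)))"

definition tour_steps :: "(nat \<Rightarrow> nat \<Rightarrow> real) \<Rightarrow> real \<Rightarrow> nat list \<Rightarrow> nat \<Rightarrow> nat" where
  "tour_steps t D cs p = (LEAST r. D \<le> tour_len t cs p r)"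

(* phase for one class V with tour cs and last visited position p:
   visited points and new last visited position *)
definition class_step ::
  "(nat \<Rightarrow> nat \<Rightarrow> real) \<Rightarrow> real \<Rightarrow> nat set \<Rightarrow> nat list \<Rightarrow> nat \<Rightarrow> nat list \<times> nat" where
  "class_step t D V cs p =
     (if V = {} then ([], p)
      else if 2 \<le> card V then
        (let r = tour_steps t D cs p
         in (map (\<lambda>q. cs ! ((p + q) mod length cs)) [0..<r + 1], (p + r) mod length cs))
      else ([cs ! p], p))"

(* one iteration of the infinite loop; state = (last visited positions, j) *)
definition alg_round ::
  "nat \<Rightarrow> (nat \<Rightarrow> real) \<Rightarrow> (nat \<Rightarrow> nat \<Rightarrow> real) \<Rightarrow> (nat \<Rightarrow> nat list) \<Rightarrow> (nat \<Rightarrow> nat)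
   \<Rightarrow> (nat \<Rightarrow> nat) \<times> nat \<Rightarrow> nat list \<times> ((nat \<Rightarrow> nat) \<times> nat)" where
  "alg_round n h t C e st =
     (let P = fst st; j = snd st; s = alg_s n; D = Dmax n t; V0 = cls0 n h;
          step = (\<lambda>i. class_step t D (cls n h i) (C i) (P i))
      in (concat (map (\<lambda>i. fst (step i)) [1..<s + 1])
            @ (if V0 = {} then [] else [e j]),
          (\<lambda>i. if 1 \<le> i \<and> i \<le> s then snd (step i) else P i,
           if V0 = {} then j else (j + 1) mod card V0)))"

definition alg_walk ::
  "nat \<Rightarrow> (nat \<Rightarrow> real) \<Rightarrow> (nat \<Rightarrow> nat \<Rightarrow> real) \<Rightarrow> (nat \<Rightarrow> nat list) \<Rightarrow> (nat \<Rightarrow> nat)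
   \<Rightarrow> (nat \<Rightarrow> nat) \<Rightarrow> nat \<Rightarrow> nat" where
  "alg_walk n h t C p0 e k =
     (0 ## flat (smap (\<lambda>st. fst (alg_round n h t C e st))
                      (siterate (\<lambda>st. snd (alg_round n h t C e st)) (p0, 0)))) !! k"

end

theory Submission
  imports Defs
begin

text \<open>A walk of maximum height \<open>M\<close> visits every point of class \<open>V\<^sub>i\<close> within time about
  \<open>M n\<^sup>2 / 2\<^sup>i\<^sup>-\<^sup>1\<close>, so it spans \<open>V\<^sub>i\<close> by a tree of at most that weight, which bounds the
  minimum spanning tree \<open>T\<^sub>i\<close>; and the bamboo at the start point, the fastest one, forces
  \<open>h\<^sub>1 D \<le> 2M\<close>.  A round of Algorithm 3 spends at most \<open>3D\<close> on each of the \<open>s = O(log n)\<close>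
  classes and \<open>D\<close> on \<open>V\<^sub>0\<close>, so it lasts \<open>O(D log n)\<close>.  Each round advances the tour of
  \<open>V\<^sub>i\<close>, of length \<open>2 w(T\<^sub>i)\<close>, by at least \<open>D\<close>, so a point of \<open>V\<^sub>i\<close> is revisited
  within about \<open>2 w(T\<^sub>i)/D + 2\<close> rounds, and a point of \<open>V\<^sub>0\<close> within \<open>|V\<^sub>0| \<le> n\<close> rounds.
  In every case the growth rate times the number of rounds times \<open>D\<close> is \<open>O(M)\<close>, so every height
  is \<open>O(M log n)\<close>.\<close>

lemma bgt_rate_pos: "bgt_instance n h t \<Longrightarrow> i < n \<Longrightarrow> 0 < h i"
  by (simp add: bgt_instance_def)

lemma bgt_rate_antimono: "bgt_instance n h t \<Longrightarrow> i \<le> j \<Longrightarrow> j < n \<Longrightarrow> h j \<le> h i"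
  by (simp add: bgt_instance_def)

lemma bgt_rate_le_1:
  assumes "bgt_instance n h t" and "(\<Sum>i<n. h i) = 1" and "v < n"
  shows "h v \<le> 1"
proof -
  have "h v \<le> (\<Sum>i<n. h i)"
    by (rule member_le_sum) (use assms bgt_rate_pos in \<open>auto simp: less_imp_le\<close>)
  with assms show ?thesis by simp
qed

lemma bgt_rate0_ge:
  assumes "bgt_instance n h t" and "(\<Sum>i<n. h i) = 1" and "0 < n"
  shows "1 / real n \<le> h 0"
proof -
  have "(\<Sum>i<n. h i) \<le> (\<Sum>i<n. h 0)"
    by (rule sum_mono) (use bgt_rate_antimono[OF assms(1)] in auto)
  with assms show ?thesis by (simp add: field_simps)
qed

lemma tt_nonneg: "bgt_instance n h t \<Longrightarrow> a < n \<Longrightarrow> b < n \<Longrightarrow> 0 \<le> tt t a b"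
  unfolding bgt_instance_def tt_def by (auto simp: less_imp_le)

lemma tt_pos: "bgt_instance n h t \<Longrightarrow> a < n \<Longrightarrow> b < n \<Longrightarrow> a \<noteq> b \<Longrightarrow> 0 < tt t a b"
  unfolding bgt_instance_def tt_def by auto

lemma tt_sym: "bgt_instance n h t \<Longrightarrow> a < n \<Longrightarrow> b < n \<Longrightarrow> tt t a b = tt t b a"
  unfolding bgt_instance_def tt_def by auto

lemma tt_triangle:
  assumes B: "bgt_instance n h t" and "a < n" "b < n" "c < n"
  shows "tt t a c \<le> tt t a b + tt t b c"
proof (cases "a = c \<or> b = a \<or> b = c")
  case True
  moreover have "0 \<le> tt t a b" "0 \<le> tt t b c" using assms tt_nonneg[OF B] by auto
  ultimately show ?thesis by (auto simp: tt_def)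
next
  case False
  with assms show ?thesis unfolding bgt_instance_def tt_def by auto
qed

lemma finite_travel_times: "finite {t i j | i j. i < (n::nat) \<and> j < n \<and> i \<noteq> j}"
proof (rule finite_subset)
  show "{t i j | i j. i < n \<and> j < n \<and> i \<noteq> j} \<subseteq> (\<lambda>(i,j). t i j) ` ({..<n} \<times> {..<n})"
    by auto
qed simp

lemma Dmax_attained:
  assumes "2 \<le> n"
  obtains a b where "a < n" "b < n" "a \<noteq> b" "Dmax n t = t a b"
proof -
  from assms have "t 0 1 \<in> {t i j | i j. i < n \<and> j < n \<and> i \<noteq> j}" by force
  then have "Dmax n t \<in> {t i j | i j. i < n \<and> j < n \<and> i \<noteq> j}"
    unfolding Dmax_def by (intro Max_in finite_travel_times) auto
  with that show ?thesis by auto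
qed

lemma Dmax_pos:
  assumes "2 \<le> n" "bgt_instance n h t"
  shows "0 < Dmax n t"
proof -
  obtain a b where "a < n" "b < n" "a \<noteq> b" "Dmax n t = t a b"
    using Dmax_attained[OF assms(1)] .
  with assms(2) show ?thesis unfolding bgt_instance_def by simp
qed

lemma tt_le_Dmax:
  assumes "2 \<le> n" "bgt_instance n h t" "a < n" "b < n"
  shows "tt t a b \<le> Dmax n t"
proof (cases "a = b")
  case True
  with Dmax_pos[OF assms(1,2)] show ?thesis by (simp add: tt_def)
next
  case False
  with assms show ?thesis
    unfolding Dmax_def tt_def by (auto intro!: Max_ge finite_travel_times)
qed

lemma arrival_0 [simp]: "arrival t w 0 = 0"
  by (simp add: arrival_def)

lemma arrival_Suc: "arrival t w (Suc k) = arrival t w k + tt t (w k) (w (Suc k))"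
  by (simp add: arrival_def)

lemma tt_le_arrival_diff:
  assumes B: "bgt_instance n h t" and W: "\<forall>k. w k < n" and "a \<le> b"
  shows "tt t (w a) (w b) \<le> arrival t w b - arrival t w a"
  using \<open>a \<le> b\<close>
proof (induction b)
  case 0
  then show ?case by (simp add: tt_def)
next
  case (Suc b)
  show ?case
  proof (cases "a = Suc b")
    case True
    then show ?thesis by (simp add: tt_def)
  next
    case False
    with Suc have "tt t (w a) (w b) \<le> arrival t w b - arrival t w a" by simp
    moreover have "tt t (w a) (w (Suc b)) \<le> tt t (w a) (w b) + tt t (w b) (w (Suc b))"
      using tt_triangle[OF B] W by blast
    ultimately show ?thesis by (simp add: arrival_Suc)
  qed
qed

lemma arrival_mono:
  assumes B: "bgt_instance n h t" and W: "\<forall>k. w k < n" and "a \<le> b"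
  shows "arrival t w a \<le> arrival t w b"
  using tt_le_arrival_diff[OF assms] tt_nonneg[OF B] W by (meson diff_ge_0_iff_ge order_trans)

lemma arrival_nonneg: "bgt_instance n h t \<Longrightarrow> \<forall>k. w k < n \<Longrightarrow> 0 \<le> arrival t w k"
  using arrival_mono[of n h t w 0 k] by simp

lemma bdd_above_cut_times: "bdd_above ({0} \<union> {arrival t w k | k. w k = i \<and> arrival t w k \<le> \<tau>})"
  by (rule bdd_aboveI[where M = "max 0 \<tau>"]) auto

lemma last_cut_nonneg: "0 \<le> last_cut t w i \<tau>"
  unfolding last_cut_def by (rule cSup_upper[OF _ bdd_above_cut_times]) auto

lemma arrival_le_last_cut: "w k = i \<Longrightarrow> arrival t w k \<le> \<tau> \<Longrightarrow> arrival t w k \<le> last_cut t w i \<tau>"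
  unfolding last_cut_def by (rule cSup_upper[OF _ bdd_above_cut_times]) auto

lemma last_cut_le:
  "0 \<le> b \<Longrightarrow> (\<And>k. w k = i \<Longrightarrow> arrival t w k \<le> \<tau> \<Longrightarrow> arrival t w k \<le> b) \<Longrightarrow> last_cut t w i \<tau> \<le> b"
  unfolding last_cut_def by (rule cSup_least) auto

lemma last_cut_unvisited: "\<nexists>k. w k = i \<and> arrival t w k \<le> \<tau> \<Longrightarrow> last_cut t w i \<tau> = 0"
  by (meson antisym last_cut_le last_cut_nonneg order_refl)

lemma height_le_MH:
  assumes "MH n h t w \<le> ereal M" "i < n" "0 \<le> \<tau>"
  shows "height h t w i \<tau> \<le> M"
proof -
  have "ereal (height h t w i \<tau>) \<le> MH n h t w"
    unfolding MH_def by (rule SUP_upper2[of "(i,\<tau>)"]) (use assms in auto)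
  with assms show ?thesis by (metis ereal_less_eq(3) order_trans)
qed

lemma MH_leI: "(\<And>i \<tau>. i < n \<Longrightarrow> 0 \<le> \<tau> \<Longrightarrow> height h t w i \<tau> \<le> B) \<Longrightarrow> MH n h t w \<le> ereal B"
  unfolding MH_def by (rule SUP_least) auto

lemma MH_nonneg: "0 < n \<Longrightarrow> 0 \<le> MH n h t w"
proof -
  assume "0 < n"
  then have "ereal (height h t w 0 0) \<le> MH n h t w"
    unfolding MH_def by (intro SUP_upper2[of "(0,0)"]) auto
  moreover have "last_cut t w 0 0 = 0"
    by (meson antisym last_cut_le last_cut_nonneg order_refl)
  ultimately show ?thesis by (simp add: height_def zero_ereal_def)
qed

lemma MH_bound_nonneg: "0 < n \<Longrightarrow> MH n h t w \<le> ereal M \<Longrightarrow> 0 \<le> M"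
  using MH_nonneg[of n h t w] by (metis ereal_less_eq(5) order_trans)

lemma visited_before:
  assumes MH: "MH n h t w \<le> ereal M" and "i < n" "0 < h i" "M / h i < \<tau>"
  shows "\<exists>k. w k = i \<and> arrival t w k \<le> \<tau>"
proof (rule ccontr)
  assume "\<not> ?thesis"
  then have "last_cut t w i \<tau> = 0" by (rule last_cut_unvisited)
  moreover have "0 \<le> M / h i" using MH_bound_nonneg[OF _ MH] assms by simp
  ultimately have "h i * \<tau> \<le> M"
    using height_le_MH[OF MH \<open>i < n\<close>, of \<tau>] assms by (simp add: height_def)
  moreover have "M < h i * \<tau>" using assms by (simp add: divide_less_eq mult.commute)
  ultimately show False by simp
qed

lemma height_le_gap:
  assumes "0 \<le> h i"
    and "\<tau> \<le> G \<or> (\<exists>k. w k = i \<and> \<tau> - G \<le> arrival t w k \<and> arrival t w k \<le> \<tau>)"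
  shows "height h t w i \<tau> \<le> h i * G"
proof -
  have "\<tau> - last_cut t w i \<tau> \<le> G"
    using assms(2) last_cut_nonneg[of t w i \<tau>] arrival_le_last_cut[of w _ i t \<tau>] by force
  with assms(1) show ?thesis unfolding height_def by (simp add: mult_left_mono)
qed


section \<open>Lower bounds for every walk\<close>

lemma spanning_tree_singleton: "spanning_tree {x} {}"
  unfolding spanning_tree_def by auto

lemma spanning_tree_finite_edges: "spanning_tree S E \<Longrightarrow> finite S \<Longrightarrow> finite E"
  unfolding spanning_tree_def by (rule finite_subset[of _ "S \<times> S"]) auto

lemma spanning_tree_insert:
  assumes sp: "spanning_tree S E" and fin: "finite S" and x: "x \<notin> S" and y: "y \<in> S"
  shows "spanning_tree (insert x S) (insert (min x y, max x y) E)"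
proof -
  let ?E = "insert (min x y, max x y) E"
  have sub: "E \<subseteq> {(a,b). a \<in> S \<and> b \<in> S \<and> a < b}" and card: "card E + 1 = card S"
    and con: "\<forall>a\<in>S. \<forall>b\<in>S. (a,b) \<in> (E \<union> E\<inverse>)\<^sup>*" using sp unfolding spanning_tree_def by auto
  have xy: "x \<noteq> y" using x y by auto
  have new: "(min x y, max x y) \<notin> E" using sub x xy by (auto simp: min_def max_def)
  have "(E \<union> E\<inverse>)\<^sup>* \<subseteq> (?E \<union> ?E\<inverse>)\<^sup>*" by (rule rtrancl_mono) auto
  with con have conS: "\<forall>a\<in>S. \<forall>b\<in>S. (a,b) \<in> (?E \<union> ?E\<inverse>)\<^sup>*" by blast
  have "(x,y) \<in> (?E \<union> ?E\<inverse>)\<^sup>*" "(y,x) \<in> (?E \<union> ?E\<inverse>)\<^sup>*"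
    by (auto intro!: r_into_rtrancl simp: min_def max_def)
  with conS y have "(a,y) \<in> (?E \<union> ?E\<inverse>)\<^sup>*" "(y,a) \<in> (?E \<union> ?E\<inverse>)\<^sup>*"
    if "a \<in> insert x S" for a
    using that by auto
  then have "\<forall>a\<in>insert x S. \<forall>b\<in>insert x S. (a,b) \<in> (?E \<union> ?E\<inverse>)\<^sup>*"
    by (blast intro: rtrancl_trans)
  moreover have "?E \<subseteq> {(a,b). a \<in> insert x S \<and> b \<in> insert x S \<and> a < b}"
    using sub xy y by (auto simp: min_def max_def)
  moreover have "card ?E + 1 = card (insert x S)"
    using card new fin x spanning_tree_finite_edges[OF sp fin] by simp
  ultimately show ?thesis unfolding spanning_tree_def by blast
qed

lemma spanning_tree_extend:
  assumes B: "bgt_instance n h t" and sp: "spanning_tree S E" and S: "S \<subseteq> {..<n}"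
    and x: "x < n" "x \<notin> S" and y: "y \<in> S"
  obtains E' where "spanning_tree (insert x S) E'" "tree_weight t E' = tree_weight t E + tt t y x"
proof
  have fin: "finite S" using S finite_subset by blast
  let ?e = "(min x y, max x y)"
  show "spanning_tree (insert x S) (insert ?e E)" by (rule spanning_tree_insert[OF sp fin x(2) y])
  have "?e \<notin> E" using sp x y unfolding spanning_tree_def by (auto simp: min_def max_def)
  moreover have "t (fst ?e) (snd ?e) = tt t y x"
    using B S x y unfolding bgt_instance_def tt_def by (auto simp: min_def max_def)
  ultimately show "tree_weight t (insert ?e E) = tree_weight t E + tt t y x"
    using spanning_tree_finite_edges[OF sp fin] unfolding tree_weight_def
    by (simp add: case_prod_beta)
qed

text \<open>The points of \<open>V\<close> visited up to step \<open>K\<close> are spanned by a tree no heavier than the walk: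
  each newly visited point of \<open>V\<close> is joined to the previously visited one, whose distance is at most
  the length of the walk in between.\<close>

lemma walk_spanning_tree_Suc:
  assumes B: "bgt_instance n h t" and W: "\<forall>k. w k < n" and V: "V \<subseteq> {..<n}"
    and k0: "k0 \<le> K" "w k0 \<in> V" and sp: "spanning_tree (w ` {..K} \<inter> V) E"
    and wt: "tree_weight t E + tt t (w k0) (w K) \<le> arrival t w K"
  shows "\<exists>E k0. k0 \<le> Suc K \<and> w k0 \<in> V \<and> spanning_tree (w ` {..Suc K} \<inter> V) E \<and>
           tree_weight t E + tt t (w k0) (w (Suc K)) \<le> arrival t w (Suc K)"
proof -
  define x where "x = w (Suc K)"
  have visited: "w ` {..Suc K} = insert x (w ` {..K})"
    unfolding x_def by (auto simp: le_Suc_eq)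
  have arr: "arrival t w (Suc K) = arrival t w K + tt t (w K) x"
    unfolding x_def by (rule arrival_Suc)
  have tri: "tt t (w k0) x \<le> tt t (w k0) (w K) + tt t (w K) x"
    unfolding x_def using tt_triangle[OF B] W by blast
  have "0 \<le> tt t (w k0) (w K)" "0 \<le> tt t (w K) x" using tt_nonneg[OF B] W x_def by auto
  consider "x \<notin> V" | "x \<in> V" "x \<in> w ` {..K}" | "x \<in> V" "x \<notin> w ` {..K}" by blast
  then show ?thesis
  proof cases
    case 1
    then have "w ` {..Suc K} \<inter> V = w ` {..K} \<inter> V" using visited by auto
    with sp k0 wt tri arr show ?thesis
      by (intro exI[of _ E] exI[of _ k0]) (auto simp: x_def[symmetric])
  next
    case 2
    then have "w ` {..Suc K} \<inter> V = w ` {..K} \<inter> V" using visited by auto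
    with sp 2 wt arr \<open>0 \<le> tt t (w k0) (w K)\<close> \<open>0 \<le> tt t (w K) x\<close> show ?thesis
      by (intro exI[of _ E] exI[of _ "Suc K"]) (simp add: x_def[symmetric] tt_def)
  next
    case 3
    have "w ` {..Suc K} \<inter> V = insert x (w ` {..K} \<inter> V)" using visited 3 by auto
    moreover obtain E' where "spanning_tree (insert x (w ` {..K} \<inter> V)) E'"
      and "tree_weight t E' = tree_weight t E + tt t (w k0) x"
      by (rule spanning_tree_extend[OF B sp, of x "w k0"]) (use 3 k0 W V x_def in auto)
    ultimately show ?thesis using 3 wt tri arr
      by (intro exI[of _ E'] exI[of _ "Suc K"]) (simp add: x_def[symmetric] tt_def)
  qed
qed

lemma walk_spanning_tree:
  assumes B: "bgt_instance n h t" and W: "\<forall>k. w k < n" and V: "V \<subseteq> {..<n}"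
    and "\<exists>k\<le>K. w k \<in> V"
  shows "\<exists>E k0. k0 \<le> K \<and> w k0 \<in> V \<and> spanning_tree (w ` {..K} \<inter> V) E \<and>
           tree_weight t E + tt t (w k0) (w K) \<le> arrival t w K"
  using \<open>\<exists>k\<le>K. w k \<in> V\<close>
proof (induction K)
  case 0
  then have "w ` {..0} \<inter> V = {w 0}" by auto
  with 0 spanning_tree_singleton show ?case
    by (intro exI[of _ "{}"] exI[of _ 0]) (simp add: tt_def tree_weight_def)
next
  case (Suc K)
  show ?case
  proof (cases "\<exists>k\<le>K. w k \<in> V")
    case False
    with Suc.prems have "w (Suc K) \<in> V" "w ` {..Suc K} \<inter> V = {w (Suc K)}"
      by (auto simp: le_Suc_eq)
    with arrival_nonneg[OF B W] spanning_tree_singleton show ?thesis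
      by (intro exI[of _ "{}"] exI[of _ "Suc K"]) (simp add: tt_def tree_weight_def)
  next
    case True
    with Suc.IH walk_spanning_tree_Suc[OF B W V] show ?thesis by blast
  qed
qed

lemma mst_weight_le_MH:
  assumes B: "bgt_instance n h t" and W: "\<forall>k. w k < n" and MH: "MH n h t w \<le> ereal M"
    and V: "V \<subseteq> {..<n}" "V \<noteq> {}" and l: "0 < l" "\<forall>u\<in>V. l \<le> h u"
    and mst: "min_spanning_tree t V T"
  shows "l * tree_weight t T \<le> M"
proof (rule field_le_epsilon)
  fix \<epsilon> :: real assume "0 < \<epsilon>"
  have M: "0 \<le> M" using MH_bound_nonneg[OF _ MH] V by auto
  have finV: "finite V" using V finite_subset by blast
  define \<tau> where "\<tau> = (M + \<epsilon>) / l"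
  have "\<exists>k. w k = u \<and> arrival t w k \<le> \<tau>" if u: "u \<in> V" for u
  proof (rule visited_before[OF MH])
    have "M / h u \<le> M / l" using divide_left_mono[OF _ M] l u by force
    also have "\<dots> < \<tau>" using \<open>0 < \<epsilon>\<close> l unfolding \<tau>_def by (simp add: divide_strict_right_mono)
    finally show "M / h u < \<tau>" .
  qed (use u V l in auto)
  then obtain kf where kf: "\<forall>u\<in>V. w (kf u) = u \<and> arrival t w (kf u) \<le> \<tau>" by metis
  define K where "K = Max (kf ` V)"
  have "K \<in> kf ` V" unfolding K_def using finV V by (intro Max_in) auto
  with kf have "arrival t w K \<le> \<tau>" "\<exists>k\<le>K. w k \<in> V" by auto
  have "V \<subseteq> w ` {..K}"
  proof
    fix u assume "u \<in> V"
    then have "kf u \<le> K" unfolding K_def using finV by (simp add: Max_ge)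
    with kf \<open>u \<in> V\<close> show "u \<in> w ` {..K}" by (metis atMost_iff image_eqI)
  qed
  then have "w ` {..K} \<inter> V = V" by auto
  with walk_spanning_tree[OF B W V(1) \<open>\<exists>k\<le>K. w k \<in> V\<close>] obtain E k0 where
    "w k0 \<in> V" "spanning_tree V E" "tree_weight t E + tt t (w k0) (w K) \<le> arrival t w K"
    by auto
  moreover have "0 \<le> tt t (w k0) (w K)" using tt_nonneg[OF B] W by auto
  ultimately have "tree_weight t T \<le> \<tau>"
    using mst \<open>arrival t w K \<le> \<tau>\<close> unfolding min_spanning_tree_def by force
  then have "l * tree_weight t T \<le> l * \<tau>" using l by simp
  also have "\<dots> = M + \<epsilon>" unfolding \<tau>_def using l by simp
  finally show "l * tree_weight t T \<le> M + \<epsilon>" .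
qed

text \<open>Whenever the walk is at \<open>x\<close>, the bamboo at the start point \<open>v\<^sub>1\<close> has been growing for
  at least the travel time from \<open>v\<^sub>1\<close> to \<open>x\<close>.\<close>

lemma rate0_tt_le_MH:
  assumes B: "bgt_instance n h t" and W: "\<forall>k. w k < n" and w0: "w 0 = 0"
    and MH: "MH n h t w \<le> ereal M" and x: "x < n"
  shows "h 0 * tt t 0 x \<le> M"
proof (cases "x = 0")
  case True
  with MH_bound_nonneg[OF _ MH] x show ?thesis by (simp add: tt_def)
next
  case False
  have n: "0 < n" using x by simp
  obtain kx where kx: "w kx = x"
    using visited_before[OF MH x bgt_rate_pos[OF B x], of "M / h x + 1"] by auto
  define \<tau> where "\<tau> = arrival t w kx"
  have "tt t 0 x \<le> \<tau>" using tt_le_arrival_diff[OF B W, of 0 kx] w0 kx unfolding \<tau>_def by simp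
  have "last_cut t w 0 \<tau> \<le> \<tau> - tt t 0 x"
  proof (rule last_cut_le)
    fix k assume wk: "w k = 0" and "arrival t w k \<le> \<tau>"
    show "arrival t w k \<le> \<tau> - tt t 0 x"
    proof (cases "k \<le> kx")
      case True
      then show ?thesis using tt_le_arrival_diff[OF B W True] wk kx unfolding \<tau>_def by simp
    next
      case False
      then have "tt t x 0 \<le> arrival t w k - \<tau>"
        using tt_le_arrival_diff[OF B W, of kx k] wk kx unfolding \<tau>_def by simp
      moreover have "0 < tt t x 0" using tt_pos[OF B x n] \<open>x \<noteq> 0\<close> by simp
      ultimately show ?thesis using \<open>arrival t w k \<le> \<tau>\<close> by simp
    qed
  qed (use \<open>tt t 0 x \<le> \<tau>\<close> in simp)
  moreover have "0 \<le> \<tau>" using \<open>tt t 0 x \<le> \<tau>\<close> tt_nonneg[OF B n x] by simp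
  ultimately have "h 0 * tt t 0 x \<le> height h t w 0 \<tau>"
    unfolding height_def using bgt_rate_pos[OF B n] by (simp add: mult_left_mono)
  also have "\<dots> \<le> M" using height_le_MH[OF MH n \<open>0 \<le> \<tau>\<close>] .
  finally show ?thesis .
qed

lemma rate0_Dmax_le_MH:
  assumes "2 \<le> n" and B: "bgt_instance n h t" and W: "\<forall>k. w k < n" and "w 0 = 0"
    and MH: "MH n h t w \<le> ereal M"
  shows "h 0 * Dmax n t \<le> 2 * M"
proof -
  obtain a b where ab: "a < n" "b < n" "a \<noteq> b" "Dmax n t = t a b"
    using Dmax_attained[OF \<open>2 \<le> n\<close>] .
  have n: "0 < n" using \<open>2 \<le> n\<close> by simp
  have "Dmax n t \<le> tt t 0 a + tt t 0 b"
    using ab tt_triangle[OF B ab(1) n ab(2)] tt_sym[OF B ab(1) n] by (simp add: tt_def)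
  then have "h 0 * Dmax n t \<le> h 0 * tt t 0 a + h 0 * tt t 0 b"
    using bgt_rate_pos[OF B n] by (simp add: mult_left_mono flip: distrib_left)
  with rate0_tt_le_MH[OF B W \<open>w 0 = 0\<close> MH, of a] rate0_tt_le_MH[OF B W \<open>w 0 = 0\<close> MH, of b] ab
  show ?thesis by linarith
qed


lemma cls_subset: "cls n h i \<subseteq> {..<n}"
  unfolding cls_def by auto

lemma cls0_subset: "cls0 n h \<subseteq> {..<n}"
  unfolding cls0_def by auto

lemma finite_cls: "finite (cls n h i)"
  by (rule finite_subset[OF cls_subset]) simp

lemma finite_cls0: "finite (cls0 n h)"
  by (rule finite_subset[OF cls0_subset]) simp

lemma cls_cover:
  assumes "2 \<le> n" and B: "bgt_instance n h t" and "(\<Sum>i<n. h i) = 1"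
    and "v < n" and "v \<notin> cls0 n h"
  shows "\<exists>i\<in>{1..alg_s n}. v \<in> cls n h i"
proof -
  have n: "0 < real n" using assms by simp
  define x where "x = h v * (real n)^2"
  have x1: "1 < x" using assms n unfolding cls0_def x_def by (auto simp: field_simps)
  have xn: "x \<le> (real n)^2"
    unfolding x_def using bgt_rate_le_1[OF B] assms by (simp add: mult_left_le_one_le)
  define i where "i = nat \<lceil>log 2 x\<rceil>"
  have "0 < log 2 x" using x1 by simp
  then have ri: "real i = of_int \<lceil>log 2 x\<rceil>" and i1: "1 \<le> i" unfolding i_def by linarith+
  have "x \<le> 2 powr (real i)" using log_le_iff[of 2 x "real i"] x1 ri by simp
  then have upper: "x \<le> 2 ^ i" by (simp add: powr_realpow)
  have "real (i - 1) < log 2 x" using ri i1 by (simp add: of_nat_diff) linarith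
  then have "2 powr (real (i - 1)) < x" using less_log_iff[of 2 x "real (i - 1)"] x1 by simp
  then have lower: "2 ^ (i - 1) < x" by (simp add: powr_realpow)
  have "log 2 x \<le> log 2 ((real n)^2)" using xn x1 n by (subst log_le_cancel_iff) auto
  also have "\<dots> = 2 * log 2 (real n)" by (simp add: log_nat_power)
  finally have "i \<le> alg_s n" unfolding i_def alg_s_def by (intro nat_mono ceiling_mono)
  moreover have "v \<in> cls n h i" unfolding cls_def using assms upper lower n
    by (simp add: x_def field_simps)
  ultimately show ?thesis using i1 by auto
qed

section \<open>Cyclic tours\<close>

lemma inj_on_shift_mod: "inj_on (\<lambda>q. (p + q) mod len) {..<len::nat}"
proof (rule linorder_inj_onI')
  fix x y assume "x \<in> {..<len}" "y \<in> {..<len}" "x < y"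
  moreover have "\<not> len dvd y - x" using calculation by (auto dest: dvd_imp_le)
  ultimately show "(p + x) mod len \<noteq> (p + y) mod len"
    using mod_eq_dvd_iff_nat[of "p + x" "p + y" len] by simp
qed

lemma shift_mod_image: "0 < len \<Longrightarrow> (\<lambda>q. (p + q) mod len) ` {..<len::nat} = {..<len}"
  by (intro card_subset_eq) (auto simp: card_image[OF inj_on_shift_mod])

definition tour_step_len :: "(nat \<Rightarrow> nat \<Rightarrow> real) \<Rightarrow> nat list \<Rightarrow> nat \<Rightarrow> real" where
  "tour_step_len t cs k = tt t (cs ! k) (cs ! ((k + 1) mod length cs))"

definition tour_total :: "(nat \<Rightarrow> nat \<Rightarrow> real) \<Rightarrow> nat list \<Rightarrow> real" where
  "tour_total t cs = (\<Sum>k<length cs. tour_step_len t cs k)"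

lemma tour_len_eq: "tour_len t cs p r = (\<Sum>q<r. tour_step_len t cs ((p + q) mod length cs))"
  unfolding tour_len_def tour_step_len_def by (simp add: mod_Suc_eq)

lemma tour_len_0 [simp]: "tour_len t cs p 0 = 0"
  by (simp add: tour_len_def)

lemma tour_len_mod: "tour_len t cs (p mod length cs) r = tour_len t cs p r"
  unfolding tour_len_eq by (simp add: mod_add_left_eq)

lemma tour_len_add:
  "tour_len t cs p (a + b) = tour_len t cs p a + tour_len t cs ((p + a) mod length cs) b"
proof (induction b)
  case (Suc b)
  have "((p + a) mod length cs + b) mod length cs = (p + (a + b)) mod length cs"
    by (simp add: mod_add_left_eq add.assoc)
  with Suc.IH show ?case unfolding tour_len_eq by simp
qed simp

lemma tour_len_shift_image:
  assumes "0 < length cs" "R \<le> length cs"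
  shows "tour_len t cs p R = (\<Sum>k\<in>(\<lambda>q. (p + q) mod length cs) ` {..<R}. tour_step_len t cs k)"
proof -
  have "inj_on (\<lambda>q. (p + q) mod length cs) {..<R}"
    by (rule inj_on_subset[OF inj_on_shift_mod]) (use assms in auto)
  then show ?thesis unfolding tour_len_eq by (simp add: sum.reindex)
qed

lemma tour_len_le_total:
  assumes "0 < length cs" "R \<le> length cs" "\<forall>k<length cs. 0 \<le> tour_step_len t cs k"
  shows "tour_len t cs p R \<le> tour_total t cs"
  unfolding tour_total_def tour_len_shift_image[OF assms(1,2)]
  by (rule sum_mono2) (use assms in auto)

lemma tour_len_length: "0 < length cs \<Longrightarrow> tour_len t cs p (length cs) = tour_total t cs"
  unfolding tour_total_def by (simp add: tour_len_shift_image shift_mod_image)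

lemma tour_len_mult:
  "0 < length cs \<Longrightarrow> tour_len t cs p (m * length cs) = real m * tour_total t cs"
proof (induction m)
  case (Suc m)
  have "tour_len t cs p (Suc m * length cs) = tour_len t cs p (m * length cs + length cs)"
    by (simp add: add.commute)
  with Suc show ?case by (simp add: tour_len_add tour_len_mod tour_len_length algebra_simps)
qed simp

lemma tour_len_unbounded:
  assumes "0 < length cs" "0 < tour_total t cs"
  shows "\<exists>r. D \<le> tour_len t cs p r"
proof -
  obtain m :: nat where "D / tour_total t cs \<le> real m" using real_arch_simple by blast
  with assms have "D \<le> real m * tour_total t cs" by (simp add: field_simps)
  with tour_len_mult[OF assms(1)] show ?thesis by metis
qed

lemma tour_position_iterate:
  assumes "\<forall>k. p (Suc k) = (p k + r k) mod length cs"
  shows "p (l + m) mod length cs = (p l + (\<Sum>j<m. r (l + j))) mod length cs"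
proof (induction m)
  case (Suc m)
  have "p (l + Suc m) mod length cs = (p (l + m) mod length cs + r (l + m)) mod length cs"
    using assms by (simp add: mod_add_left_eq)
  with Suc.IH show ?case by (simp add: mod_add_left_eq add.assoc)
qed simp

lemma tour_len_iterate:
  assumes "\<forall>k. p (Suc k) = (p k + r k) mod length cs"
  shows "tour_len t cs (p l) (\<Sum>j<m. r (l + j)) = (\<Sum>j<m. tour_len t cs (p (l + j)) (r (l + j)))"
proof (induction m)
  case (Suc m)
  have "tour_len t cs (p l) (\<Sum>j<Suc m. r (l + j))
      = tour_len t cs (p l) (\<Sum>j<m. r (l + j))
        + tour_len t cs ((p l + (\<Sum>j<m. r (l + j))) mod length cs) (r (l + m))"
    by (simp add: tour_len_add)
  also have "(p l + (\<Sum>j<m. r (l + j))) mod length cs = p (l + m) mod length cs"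
    using tour_position_iterate[OF assms] by simp
  finally show ?case using Suc.IH by (simp add: tour_len_mod)
qed simp

lemma tour_iterate_covers:
  assumes "\<forall>k. p (Suc k) = (p k + r k) mod length cs" and "q < (\<Sum>j<m. r (l + j))"
  shows "\<exists>j<m. \<exists>q'<r (l + j). (p l + q) mod length cs = (p (l + j) + q') mod length cs"
  using assms(2)
proof (induction m)
  case (Suc m)
  show ?case
  proof (cases "q < (\<Sum>j<m. r (l + j))")
    case True
    with Suc.IH show ?thesis using less_SucI by blast
  next
    case False
    define q' where "q' = q - (\<Sum>j<m. r (l + j))"
    have "q' < r (l + m)" using False Suc.prems unfolding q'_def by simp
    have "p l + q = (p l + (\<Sum>j<m. r (l + j))) + q'" using False unfolding q'_def by simp
    then have "(p l + q) mod length cs = ((p l + (\<Sum>j<m. r (l + j))) mod length cs + q') mod length cs"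
      by (metis mod_add_left_eq)
    also have "\<dots> = (p (l + m) + q') mod length cs"
      by (metis tour_position_iterate[OF assms(1)] mod_add_left_eq)
    finally show ?thesis using \<open>q' < r (l + m)\<close> by blast
  qed
qed simp

lemma tour_phases_cover:
  assumes cs: "cs \<noteq> []" and nonneg: "\<forall>k<length cs. 0 \<le> tour_step_len t cs k"
    and pos: "\<forall>k. p (Suc k) = (p k + r k) mod length cs"
    and advance: "\<forall>k. D \<le> tour_len t cs (p k) (r k)"
    and K: "tour_total t cs < real K * D"
    and x: "x \<in> set cs"
  shows "\<exists>j q. l \<le> j \<and> j < l + K \<and> q < r j \<and> cs ! ((p j + q) mod length cs) = x"
proof -
  have len: "0 < length cs" using cs by simp
  define S where "S = (\<Sum>j<K. r (l + j))"
  have "real K * D \<le> tour_len t cs (p l) S"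
    unfolding S_def tour_len_iterate[OF pos] using advance sum_bounded_below[of "{..<K}" D] by simp
  have "length cs \<le> S"
  proof (rule ccontr)
    assume "\<not> length cs \<le> S"
    then have "tour_len t cs (p l) S \<le> tour_total t cs"
      by (intro tour_len_le_total[OF len _ nonneg]) simp
    with K \<open>real K * D \<le> tour_len t cs (p l) S\<close> show False by simp
  qed
  obtain i where i: "i < length cs" "cs ! i = x" using x by (auto simp: in_set_conv_nth)
  then have "i \<in> (\<lambda>q. (p l + q) mod length cs) ` {..<length cs}"
    using shift_mod_image[OF len] by simp
  then obtain q where q: "q < length cs" "(p l + q) mod length cs = i" by auto
  with \<open>length cs \<le> S\<close> obtain j q' where "j < K" "q' < r (l + j)"
    "(p l + q) mod length cs = (p (l + j) + q') mod length cs"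
    using tour_iterate_covers[OF pos, where q = q and m = K and l = l] unfolding S_def by auto
  with q i show ?thesis by (intro exI[of _ "l + j"] exI[of _ q']) auto
qed

lemma tree_weight_pos:
  assumes B: "bgt_instance n h t" and V: "V \<subseteq> {..<n}" and sp: "spanning_tree V E"
    and "2 \<le> card V"
  shows "0 < tree_weight t E"
proof -
  have sub: "E \<subseteq> {(a,b). a \<in> V \<and> b \<in> V \<and> a < b}" and "card E + 1 = card V"
    using sp unfolding spanning_tree_def by auto
  with \<open>2 \<le> card V\<close> have "E \<noteq> {}" by auto
  moreover have "0 < t a b" if "(a,b) \<in> E" for a b
  proof -
    have "a < n" "b < n" "a < b" using that sub V by auto
    then show ?thesis using tt_pos[OF B, of a b] by (simp add: tt_def)
  qed
  ultimately show ?thesis unfolding tree_weight_def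
    using spanning_tree_finite_edges[OF sp finite_subset[OF V]] by (intro sum_pos) auto
qed

lemma euler_tour_set:
  assumes sp: "spanning_tree V E" and "finite V" "V \<noteq> {}" and et: "euler_tour V E cs"
  shows "cs \<noteq> [] \<and> set cs = V"
proof (cases "card V = 1")
  case True
  then obtain x where "V = {x}" by (rule card_1_singletonE)
  with True et show ?thesis unfolding euler_tour_def by simp
next
  case False
  have "0 < card V" using assms by (simp add: card_gt_0_iff)
  with False have "2 \<le> card V" by linarith
  define pr where "pr k = (cs ! k, cs ! ((k + 1) mod length cs))" for k
  have ne: "cs \<noteq> []" and M: "mset (map pr [0..<length cs]) = mset_set (E \<union> E\<inverse>)"
    using et False unfolding euler_tour_def pr_def by auto
  have fin: "finite (E \<union> E\<inverse>)" using spanning_tree_finite_edges[OF sp \<open>finite V\<close>] by simp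
  have pairs: "pr ` {..<length cs} = E \<union> E\<inverse>"
    using arg_cong[OF M, of set_mset] fin by (simp add: atLeast0LessThan)
  have sub: "E \<subseteq> {(a,b). a \<in> V \<and> b \<in> V \<and> a < b}" and con: "\<forall>a\<in>V. \<forall>b\<in>V. (a,b) \<in> (E \<union> E\<inverse>)\<^sup>*"
    using sp unfolding spanning_tree_def by auto
  have "set cs \<subseteq> V"
  proof
    fix x assume "x \<in> set cs"
    then obtain k where "k < length cs" "x = cs ! k" by (auto simp: in_set_conv_nth)
    then have "(x, cs ! ((k + 1) mod length cs)) \<in> E \<union> E\<inverse>"
      using pairs unfolding pr_def by auto
    with sub show "x \<in> V" by auto
  qed
  moreover have "V \<subseteq> set cs"
  proof
    fix v assume v: "v \<in> V"
    have "1 \<le> card (V - {v})" using \<open>2 \<le> card V\<close> v \<open>finite V\<close> by (simp add: card_Diff_singleton)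
    then have "V - {v} \<noteq> {}" by (metis card.empty not_one_le_zero)
    then obtain u where "u \<in> V" "u \<noteq> v" by blast
    with con v have "(v,u) \<in> (E \<union> E\<inverse>)\<^sup>*" by blast
    with \<open>u \<noteq> v\<close> obtain c where "(v,c) \<in> E \<union> E\<inverse>" by (metis converse_rtranclE)
    with pairs obtain k where "k < length cs" "pr k = (v,c)" by (metis imageE lessThan_iff)
    then show "v \<in> set cs" unfolding pr_def by auto
  qed
  ultimately show ?thesis using ne by auto
qed

lemma sum_tt_sym_closure:
  assumes B: "bgt_instance n h t" and E: "E \<subseteq> {(a,b). a < n \<and> b < n \<and> a < b}" "finite E"
  shows "(\<Sum>(a,b)\<in>E \<union> E\<inverse>. tt t a b) = 2 * tree_weight t E"
proof -
  have "E \<inter> E\<inverse> = {}"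
  proof (intro equals0I)
    fix x assume "x \<in> E \<inter> E\<inverse>"
    then obtain a b where "(a,b) \<in> E" "(b,a) \<in> E" by (cases x) auto
    with E(1) have "a < b" "b < a" by blast+
    then show False by simp
  qed
  then have "(\<Sum>(a,b)\<in>E \<union> E\<inverse>. tt t a b) = (\<Sum>(a,b)\<in>E. tt t a b) + (\<Sum>(a,b)\<in>E\<inverse>. tt t a b)"
    using E(2) by (intro sum.union_disjoint) auto
  also have "(\<Sum>(a,b)\<in>E\<inverse>. tt t a b) = (\<Sum>(a,b)\<in>E. tt t b a)"
  proof -
    have "E\<inverse> = prod.swap ` E" by auto
    then show ?thesis by (simp add: sum.reindex comp_def case_prod_unfold)
  qed
  also have "\<dots> = (\<Sum>(a,b)\<in>E. tt t a b)"
    using E(1) tt_sym[OF B] by (intro sum.cong) auto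
  also have "(\<Sum>(a,b)\<in>E. tt t a b) = tree_weight t E"
    unfolding tree_weight_def using E(1) by (intro sum.cong) (auto simp: tt_def)
  finally show ?thesis by simp
qed

lemma euler_tour_total:
  assumes B: "bgt_instance n h t" and V: "V \<subseteq> {..<n}" and sp: "spanning_tree V E"
    and "2 \<le> card V" and et: "euler_tour V E cs"
  shows "tour_total t cs = 2 * tree_weight t E"
proof -
  define pr where "pr k = (cs ! k, cs ! ((k + 1) mod length cs))" for k
  have M: "mset (map pr [0..<length cs]) = mset_set (E \<union> E\<inverse>)"
    using et \<open>2 \<le> card V\<close> unfolding euler_tour_def pr_def by auto
  have finE: "finite E" using spanning_tree_finite_edges[OF sp finite_subset[OF V]] by simp
  have "tour_total t cs = sum_list (map (case_prod (tt t)) (map pr [0..<length cs]))"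
    unfolding tour_total_def tour_step_len_def pr_def by (simp add: sum_list_sum_nth atLeast0LessThan)
  also have "\<dots> = sum_mset (image_mset (case_prod (tt t)) (mset (map pr [0..<length cs])))"
    by (metis mset_map sum_mset_sum_list)
  also have "\<dots> = (\<Sum>(a,b)\<in>E \<union> E\<inverse>. tt t a b)" unfolding M by (simp add: sum_unfold_sum_mset)
  also have "\<dots> = 2 * tree_weight t E"
    using sp V finE unfolding spanning_tree_def by (intro sum_tt_sym_closure[OF B]) auto
  finally show ?thesis .
qed

fun walk_len :: "(nat \<Rightarrow> nat \<Rightarrow> real) \<Rightarrow> nat \<Rightarrow> nat list \<Rightarrow> real" where
  "walk_len t a [] = 0"
| "walk_len t a (x # xs) = tt t a x + walk_len t x xs"

lemma walk_len_append: "walk_len t a (xs @ ys) = walk_len t a xs + walk_len t (last (a # xs)) ys"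
  by (induction xs arbitrary: a) auto

lemma walk_len_map_upt:
  "walk_len t a (map g [0..<Suc r]) = tt t a (g 0) + (\<Sum>q<r. tt t (g q) (g (Suc q)))"
  by (induction r) (simp_all add: walk_len_append last_map)

lemma walk_len_concat_le:
  assumes "\<forall>i\<in>set js. \<forall>a<n. walk_len t a (g i) \<le> c \<and> set (g i) \<subseteq> {..<n}" and "a < n"
  shows "walk_len t a (concat (map g js)) \<le> real (length js) * c"
  using assms
proof (induction js arbitrary: a)
  case (Cons i js)
  have "set (a # g i) \<subseteq> {..<n}" using Cons.prems by auto
  then have "last (a # g i) < n" using last_in_set[of "a # g i"] by auto
  then have "walk_len t a (concat (map g (i # js))) \<le> c + real (length js) * c"
    using Cons by (simp add: walk_len_append add_mono)
  then show ?case by (simp add: algebra_simps)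
qed simp

lemma arrival_walk_len:
  "(\<forall>q<length xs. w (m + Suc q) = xs ! q) \<Longrightarrow>
    arrival t w (m + length xs) = arrival t w m + walk_len t (w m) xs"
proof (induction xs arbitrary: m)
  case (Cons x xs)
  then have "w (Suc m) = x" "\<forall>q<length xs. w (Suc m + Suc q) = xs ! q" by force+
  with Cons.IH[of "Suc m"] show ?case by (simp add: arrival_Suc)
qed simp

lemma flat_snth_sum:
  assumes "\<forall>j. ws !! j \<noteq> []" and "q < length (ws !! k)"
  shows "flat ws !! ((\<Sum>j<k. length (ws !! j)) + q) = (ws !! k) ! q"
  using assms
proof (induction k arbitrary: ws)
  case 0
  then show ?case using flat_snth[of ws q] by (simp add: sset_range)
next
  case (Suc k)
  have ne: "\<forall>xs\<in>sset ws. xs \<noteq> []" using Suc.prems by (simp add: sset_range)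
  have "(\<Sum>j<Suc k. length (ws !! j)) = length (shd ws) + (\<Sum>j<k. length (stl ws !! j))"
    by (subst sum.lessThan_Suc_shift) simp
  then have "flat ws !! ((\<Sum>j<Suc k. length (ws !! j)) + q)
      = flat (stl ws) !! ((\<Sum>j<k. length (stl ws !! j)) + q)"
    using flat_snth[OF ne] by simp
  also have "\<dots> = (stl ws !! k) ! q"
    using Suc.IH[of "stl ws"] Suc.prems by (simp add: snth.simps(2)[symmetric] del: snth.simps(2))
  finally show ?case by simp
qed


section \<open>The schedule of Algorithm 3\<close>

lemma alg_round_eq: "alg_round n h t C e (P, j) =
  (concat (map (\<lambda>i. fst (class_step t (Dmax n t) (cls n h i) (C i) (P i))) [1..<alg_s n + 1])
     @ (if cls0 n h = {} then [] else [e j]),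
   (\<lambda>i. if 1 \<le> i \<and> i \<le> alg_s n then snd (class_step t (Dmax n t) (cls n h i) (C i) (P i)) else P i,
    if cls0 n h = {} then j else (j + 1) mod card (cls0 n h)))"
  unfolding alg_round_def Let_def fst_conv snd_conv by simp

locale algorithm3 =
  fixes n :: nat and h :: "nat \<Rightarrow> real" and t :: "nat \<Rightarrow> nat \<Rightarrow> real"
    and T :: "nat \<Rightarrow> (nat \<times> nat) set" and C :: "nat \<Rightarrow> nat list" and p0 :: "nat \<Rightarrow> nat"
    and e :: "nat \<Rightarrow> nat"
  assumes two_le_n: "2 \<le> n" and inst: "bgt_instance n h t" and rates_sum: "(\<Sum>i<n. h i) = 1"
    and tours: "\<forall>i\<in>{1..alg_s n}. cls n h i \<noteq> {} \<longrightarrow>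
        min_spanning_tree t (cls n h i) (T i) \<and> euler_tour (cls n h i) (T i) (C i) \<and>
        p0 i < length (C i)"
    and enum: "bij_betw e {..<card (cls0 n h)} (cls0 n h)"
begin

abbreviation "D \<equiv> Dmax n t"
abbreviation "s \<equiv> alg_s n"
abbreviation "V0 \<equiv> cls0 n h"
abbreviation "W \<equiv> alg_walk n h t C p0 e"

lemma D_pos: "0 < D"
  by (rule Dmax_pos[OF two_le_n inst])

text \<open>At the start of round \<open>k\<close> (counting from \<open>0\<close>), \<open>pos k i\<close> is the position on the tour
  \<open>C i\<close> of its last visited point and \<open>idx k\<close> is the counter \<open>j\<close> of the algorithm.\<close>

definition state :: "nat \<Rightarrow> (nat \<Rightarrow> nat) \<times> nat" where
  "state k = ((\<lambda>st. snd (alg_round n h t C e st)) ^^ k) (p0, 0)"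

definition pos :: "nat \<Rightarrow> nat \<Rightarrow> nat" where
  "pos k = fst (state k)"

definition idx :: "nat \<Rightarrow> nat" where
  "idx k = snd (state k)"

definition phase :: "nat \<Rightarrow> nat \<Rightarrow> nat list" where
  "phase k i = fst (class_step t D (cls n h i) (C i) (pos k i))"

definition round_seq :: "nat \<Rightarrow> nat list" where
  "round_seq k = fst (alg_round n h t C e (state k))"

lemma state_eq: "state k = (pos k, idx k)"
  unfolding pos_def idx_def by simp

lemma round_seq_eq:
  "round_seq k = concat (map (phase k) [1..<s+1]) @ (if V0 = {} then [] else [e (idx k)])"
  unfolding round_seq_def phase_def state_eq[of k] alg_round_eq by simp

lemma state_Suc: "state (Suc k) = snd (alg_round n h t C e (pos k, idx k))"
  unfolding state_def by (simp add: state_eq[of k, unfolded state_def])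

lemma pos_0: "pos 0 = p0"
  by (simp add: pos_def state_def)

lemma pos_Suc: "1 \<le> i \<Longrightarrow> i \<le> s \<Longrightarrow> pos (Suc k) i = snd (class_step t D (cls n h i) (C i) (pos k i))"
  using arg_cong[OF state_Suc[of k], of fst] by (simp add: alg_round_eq flip: pos_def)

lemma idx_Suc: "idx (Suc k) = (if V0 = {} then idx k else (idx k + 1) mod card V0)"
  using arg_cong[OF state_Suc[of k], of snd] by (simp add: alg_round_eq flip: idx_def)

lemma idx_eq: "V0 \<noteq> {} \<Longrightarrow> idx k = k mod card V0"
proof (induction k)
  case 0
  show ?case by (simp add: idx_def state_def)
next
  case (Suc k)
  then show ?case by (simp add: idx_Suc mod_Suc_eq)
qed

lemma enum_idx: "V0 \<noteq> {} \<Longrightarrow> e (idx k) \<in> V0"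
proof -
  assume "V0 \<noteq> {}"
  then have "idx k < card V0" using idx_eq finite_cls0[of n h] by (simp add: card_gt_0_iff)
  with enum show ?thesis unfolding bij_betw_def by auto
qed

lemma phase_empty: "cls n h i = {} \<Longrightarrow> phase k i = []"
  unfolding phase_def class_step_def by simp

lemma phase_subset_round: "i \<in> {1..s} \<Longrightarrow> set (phase k i) \<subseteq> set (round_seq k)"
proof -
  assume "i \<in> {1..s}"
  then have "i \<in> set [1..<s+1]" by auto
  then have "phase k i \<in> set (map (phase k) [1..<s+1])" unfolding set_map by (rule imageI)
  then have "set (phase k i) \<subseteq> set (concat (map (phase k) [1..<s+1]))" by auto
  then show ?thesis unfolding round_seq_eq by auto
qed

context
  fixes i assumes i: "i \<in> {1..s}" and nonempty: "cls n h i \<noteq> {}"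
begin

lemma mst: "min_spanning_tree t (cls n h i) (T i)"
  and euler: "euler_tour (cls n h i) (T i) (C i)"
  and p0_less: "p0 i < length (C i)"
  using tours i nonempty by auto

lemma spanning: "spanning_tree (cls n h i) (T i)"
  using mst unfolding min_spanning_tree_def by blast

lemma tour_set: "C i \<noteq> [] \<and> set (C i) = cls n h i"
  by (rule euler_tour_set[OF spanning finite_cls nonempty euler])

lemma tour_point_less: "j < length (C i) \<Longrightarrow> C i ! j < n"
  using tour_set cls_subset[of n h i] nth_mem by blast

lemma two_le_card: "card (cls n h i) \<noteq> 1 \<Longrightarrow> 2 \<le> card (cls n h i)"
proof -
  assume "card (cls n h i) \<noteq> 1"
  moreover have "card (cls n h i) \<noteq> 0" using nonempty finite_cls[of n h i] by simp
  ultimately show ?thesis by linarith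
qed

definition steps :: "nat \<Rightarrow> nat" where
  "steps k = tour_steps t D (C i) (pos k i)"

context
  assumes several: "2 \<le> card (cls n h i)"
begin

lemma tour_total_eq: "tour_total t (C i) = 2 * tree_weight t (T i)"
  by (rule euler_tour_total[OF inst cls_subset spanning several euler])

lemma phase_tour: "phase k i = map (\<lambda>q. C i ! ((pos k i + q) mod length (C i))) [0..<steps k + 1]"
  unfolding phase_def class_step_def steps_def using nonempty several by (simp add: Let_def)

lemma pos_Suc_tour: "pos (Suc k) i = (pos k i + steps k) mod length (C i)"
  using i nonempty several by (simp add: pos_Suc class_step_def steps_def Let_def)

lemma steps_advance: "D \<le> tour_len t (C i) (pos k i) (steps k)"
  unfolding steps_def tour_steps_def
proof (rule LeastI_ex, rule tour_len_unbounded)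
  show "0 < length (C i)" using tour_set by simp
  show "0 < tour_total t (C i)"
    using tour_total_eq tree_weight_pos[OF inst cls_subset spanning several] by simp
qed

lemma steps_minimal: "0 < steps k \<and> tour_len t (C i) (pos k i) (steps k - 1) < D"
proof -
  have "steps k \<noteq> 0"
  proof
    assume "steps k = 0"
    with steps_advance[of k] D_pos show False by simp
  qed
  moreover have "\<not> D \<le> tour_len t (C i) (pos k i) (steps k - 1)"
    by (rule not_less_Least) (use \<open>steps k \<noteq> 0\<close> in \<open>simp add: steps_def tour_steps_def\<close>)
  ultimately show ?thesis by simp
qed

end

lemma pos_less: "pos k i < length (C i)"
proof (cases "card (cls n h i) = 1")
  case True
  then show ?thesis
    by (induction k) (use i nonempty p0_less in \<open>simp_all add: pos_0 pos_Suc class_step_def\<close>)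
next
  case False
  then show ?thesis
    by (cases k) (use tour_set p0_less two_le_card in \<open>simp_all add: pos_0 pos_Suc_tour\<close>)
qed

lemma phase_single: "card (cls n h i) = 1 \<Longrightarrow> phase k i = [C i ! pos k i] \<and> set (phase k i) = cls n h i"
proof -
  assume one: "card (cls n h i) = 1"
  then obtain x where "cls n h i = {x}" by (rule card_1_singletonE)
  with one euler pos_less[of k] show ?thesis
    unfolding phase_def class_step_def euler_tour_def using nonempty by simp
qed

text \<open>A phase consists of the jump to the last visited point (at most \<open>D\<close>), a stretch of the tour
  shorter than \<open>D\<close>, and one more tour edge (at most \<open>D\<close>).\<close>

lemma phase_walk_len: "a < n \<Longrightarrow> walk_len t a (phase k i) \<le> 3 * D"
proof (cases "card (cls n h i) = 1")
  case True
  assume "a < n"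
  have "walk_len t a (phase k i) = tt t a (C i ! pos k i)" using phase_single[OF True] by simp
  also have "\<dots> \<le> D" by (rule tt_le_Dmax[OF two_le_n inst \<open>a < n\<close> tour_point_less[OF pos_less]])
  finally show ?thesis using D_pos by simp
next
  case False
  assume "a < n"
  note several = two_le_card[OF False]
  define g where "g q = C i ! ((pos k i + q) mod length (C i))" for q
  have gn: "g q < n" for q unfolding g_def using tour_point_less tour_set by simp
  obtain r where r: "steps k = Suc r" using steps_minimal[OF several, of k] by (cases "steps k") auto
  have "tour_len t (C i) (pos k i) r = (\<Sum>q<r. tt t (g q) (g (Suc q)))"
    unfolding tour_len_def g_def by simp
  moreover have "phase k i = map g [0..<Suc (Suc r)]"
    unfolding phase_tour[OF several] r g_def by (simp del: upt_Suc)
  ultimately have "walk_len t a (phase k i) = tt t a (g 0) + tour_len t (C i) (pos k i) r + tt t (g r) (g (Suc r))"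
    by (simp add: walk_len_map_upt del: upt_Suc)
  also have "\<dots> \<le> D + D + D"
    using steps_minimal[OF several, of k] r tt_le_Dmax[OF two_le_n inst \<open>a < n\<close> gn]
      tt_le_Dmax[OF two_le_n inst gn gn] by (intro add_mono) auto
  finally show ?thesis by simp
qed

lemma phase_subset: "set (phase k i) \<subseteq> {..<n}"
proof (cases "card (cls n h i) = 1")
  case True
  then show ?thesis using phase_single[OF True] tour_point_less[OF pos_less] by simp
next
  case False
  then show ?thesis
    unfolding phase_tour[OF two_le_card[OF False]] using tour_point_less tour_set by auto
qed

end

lemma phase_walk_len_le: "i \<in> {1..s} \<Longrightarrow> a < n \<Longrightarrow> walk_len t a (phase k i) \<le> 3 * D"
  using phase_walk_len phase_empty D_pos by (cases "cls n h i = {}") auto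

lemma phase_subset_points: "i \<in> {1..s} \<Longrightarrow> set (phase k i) \<subseteq> {..<n}"
  using phase_subset phase_empty by (cases "cls n h i = {}") auto

lemma phases_subset_points: "set (concat (map (phase k) [1..<s+1])) \<subseteq> {..<n}"
proof
  fix x assume "x \<in> set (concat (map (phase k) [1..<s+1]))"
  then obtain i where "i \<in> {1..s}" "x \<in> set (phase k i)"
    by (auto simp: less_Suc_eq_le simp del: upt_Suc)
  then show "x \<in> {..<n}" using phase_subset_points by blast
qed

lemma enum_idx_less: "V0 \<noteq> {} \<Longrightarrow> e (idx k) < n"
  using enum_idx cls0_subset[of n h] by blast

lemma round_seq_subset: "set (round_seq k) \<subseteq> {..<n}"
  using phases_subset_points[of k] enum_idx_less[of k] unfolding round_seq_eq
  by (auto simp del: upt_Suc)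

lemma round_walk_len: "a < n \<Longrightarrow> walk_len t a (round_seq k) \<le> (3 * real s + 1) * D"
proof -
  assume "a < n"
  let ?c = "concat (map (phase k) [1..<s+1])"
  have phases: "walk_len t a ?c \<le> real (length [1..<s+1]) * (3 * D)"
    by (rule walk_len_concat_le[OF _ \<open>a < n\<close>])
      (use phase_walk_len_le phase_subset_points in \<open>simp del: upt_Suc\<close>)
  have "set (a # ?c) \<subseteq> {..<n}"
    unfolding list.set using phases_subset_points \<open>a < n\<close> by blast
  moreover have "last (a # ?c) \<in> set (a # ?c)" by (rule last_in_set) simp
  ultimately have "last (a # ?c) < n" by blast
  then have last_hop: "walk_len t (last (a # ?c)) (if V0 = {} then [] else [e (idx k)]) \<le> D"
    using D_pos enum_idx_less tt_le_Dmax[OF two_le_n inst] by auto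
  have "walk_len t a (round_seq k)
      = walk_len t a ?c + walk_len t (last (a # ?c)) (if V0 = {} then [] else [e (idx k)])"
    unfolding round_seq_eq walk_len_append ..
  also have "\<dots> \<le> real s * (3 * D) + D"
    using phases last_hop unfolding length_upt by simp
  finally show ?thesis by (simp add: algebra_simps)
qed

end


context algorithm3
begin

lemma round_seq_nonempty: "round_seq k \<noteq> []"
proof (cases "V0 = {}")
  case True
  then obtain i where "i \<in> {1..s}" "0 \<in> cls n h i"
    using cls_cover[OF two_le_n inst rates_sum] two_le_n by fastforce
  then have i: "i \<in> {1..s}" and nonempty: "cls n h i \<noteq> {}" by auto
  have "phase k i \<noteq> []"
  proof (cases "card (cls n h i) = 1")
    case True
    then show ?thesis using phase_single[OF i nonempty True] by simp
  next
    case False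
    then show ?thesis using phase_tour[OF i nonempty two_le_card[OF i nonempty False]] by simp
  qed
  with phase_subset_round[OF i, of k] show ?thesis by auto
qed (simp add: round_seq_eq)

definition rounds :: "nat list stream" where
  "rounds = smap (\<lambda>st. fst (alg_round n h t C e st)) (siterate (\<lambda>st. snd (alg_round n h t C e st)) (p0, 0))"

definition round_offset :: "nat \<Rightarrow> nat" where
  "round_offset k = (\<Sum>j<k. length (round_seq j))"

definition round_start :: "nat \<Rightarrow> real" where
  "round_start k = arrival t W (round_offset k)"

lemma snth_rounds: "rounds !! j = round_seq j"
  unfolding rounds_def round_seq_def state_def by simp

lemma walk_0: "W 0 = 0"
  by (simp add: alg_walk_def)

lemma walk_Suc: "W (Suc m) = flat rounds !! m"
  by (simp add: alg_walk_def rounds_def)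

lemma walk_round: "q < length (round_seq k) \<Longrightarrow> W (round_offset k + Suc q) = round_seq k ! q"
  using flat_snth_sum[of rounds q k] round_seq_nonempty
  by (simp add: walk_Suc round_offset_def snth_rounds)

lemma walk_less: "W m < n"
proof (cases m)
  case 0
  then show ?thesis using two_le_n by (simp add: walk_0)
next
  case (Suc m')
  have "\<forall>xs\<in>sset rounds. xs \<noteq> []" using round_seq_nonempty by (simp add: sset_range snth_rounds)
  moreover have "W m \<in> sset (flat rounds)" unfolding Suc walk_Suc by simp
  ultimately have "W m \<in> (\<Union>xs\<in>sset rounds. set xs)" by simp
  then obtain j where "W m \<in> set (round_seq j)" by (auto simp: sset_range snth_rounds)
  then show ?thesis using round_seq_subset by blast
qed

lemma walk_points: "\<forall>m. W m < n"
  using walk_less by blast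

lemma round_start_0: "round_start 0 = 0"
  by (simp add: round_start_def round_offset_def)

lemma round_start_Suc: "round_start (Suc k) = round_start k + walk_len t (W (round_offset k)) (round_seq k)"
  using arrival_walk_len[of "round_seq k" W "round_offset k" t] walk_round
  by (simp add: round_start_def round_offset_def)

lemma round_start_mono: "k \<le> j \<Longrightarrow> round_start k \<le> round_start j"
  unfolding round_start_def round_offset_def
  by (intro arrival_mono[OF inst walk_points] sum_mono2) auto

lemma round_start_add: "round_start (k + d) \<le> round_start k + real d * ((3 * real s + 1) * D)"
proof (induction d)
  case (Suc d)
  have "round_start (k + Suc d) \<le> round_start (k + d) + (3 * real s + 1) * D"
    using round_start_Suc[of "k + d"] round_walk_len[OF walk_less] by simp
  with Suc.IH show ?case by (simp add: algebra_simps)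
qed simp

lemma visit_in_round:
  assumes "v \<in> set (round_seq j)"
  shows "\<exists>m. W m = v \<and> round_start j \<le> arrival t W m \<and> arrival t W m \<le> round_start (Suc j)"
proof -
  obtain q where q: "q < length (round_seq j)" "round_seq j ! q = v"
    using assms by (auto simp: in_set_conv_nth)
  then have "W (round_offset j + Suc q) = v" using walk_round by simp
  moreover have "round_offset j \<le> round_offset j + Suc q" "round_offset j + Suc q \<le> round_offset (Suc j)"
    using q by (simp_all add: round_offset_def)
  ultimately show ?thesis unfolding round_start_def
    by (intro exI[of _ "round_offset j + Suc q"]) (auto intro: arrival_mono[OF inst walk_points])
qed

definition visited_every :: "nat \<Rightarrow> nat \<Rightarrow> bool" where
  "visited_every v K \<longleftrightarrow> (\<forall>k. \<exists>j. k \<le> j \<and> j < k + K \<and> v \<in> set (round_seq j))"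

lemma visited_every_mono: "visited_every v K \<Longrightarrow> K \<le> K' \<Longrightarrow> visited_every v K'"
  unfolding visited_every_def by (meson add_le_cancel_left less_le_trans)

lemma visit_in_window:
  assumes "visited_every v K"
  shows "\<exists>m. W m = v \<and> round_start k \<le> arrival t W m \<and> arrival t W m \<le> round_start (k + K)"
proof -
  obtain j where j: "k \<le> j" "j < k + K" "v \<in> set (round_seq j)"
    using assms unfolding visited_every_def by blast
  moreover obtain m where "W m = v" "round_start j \<le> arrival t W m" "arrival t W m \<le> round_start (Suc j)"
    using visit_in_round[OF j(3)] by blast
  moreover have "round_start k \<le> round_start j" "round_start (Suc j) \<le> round_start (k + K)"
    using j round_start_mono by simp_all
  ultimately show ?thesis by (intro exI[of _ m]) simp
qed

text \<open>The points \<open>v\<^sub>1\<close> and \<open>v\<^sub>2\<close> are both visited in every window of rounds, so each window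
  takes at least \<open>tt t 0 1 > 0\<close> time: the schedule does not stall.\<close>

lemma round_start_unbounded:
  assumes "visited_every 0 K" "visited_every 1 K"
  shows "\<exists>k. x < round_start k"
proof -
  have n: "0 < n" "1 < n" using two_le_n by auto
  define \<delta> where "\<delta> = tt t 0 1"
  have "0 < \<delta>" unfolding \<delta>_def using tt_pos[OF inst n] by simp
  have step: "round_start k + \<delta> \<le> round_start (k + K)" for k
  proof -
    obtain m0 where m0: "W m0 = 0"
      "round_start k \<le> arrival t W m0" "arrival t W m0 \<le> round_start (k + K)"
      using visit_in_window[OF assms(1)] by blast
    obtain m1 where m1: "W m1 = 1"
      "round_start k \<le> arrival t W m1" "arrival t W m1 \<le> round_start (k + K)"
      using visit_in_window[OF assms(2)] by blast
    show ?thesis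
    proof (cases "m0 \<le> m1")
      case True
      from tt_le_arrival_diff[OF inst walk_points True] m0 m1 show ?thesis
        unfolding \<delta>_def by simp
    next
      case False
      then have "m1 \<le> m0" by simp
      from tt_le_arrival_diff[OF inst walk_points this] m0 m1 tt_sym[OF inst n] show ?thesis
        unfolding \<delta>_def by simp
    qed
  qed
  have linear: "real m * \<delta> \<le> round_start (m * K)" for m
  proof (induction m)
    case (Suc m)
    then show ?case using step[of "m * K"] by (simp add: algebra_simps)
  qed (simp add: round_start_0)
  obtain m :: nat where "x / \<delta> < real m" using reals_Archimedean2 by blast
  with \<open>0 < \<delta>\<close> have "x < real m * \<delta>" by (simp add: field_simps)
  with linear[of m] show ?thesis by (intro exI[of _ "m * K"]) simp
qed

lemma last_round_before:
  assumes "0 \<le> \<tau>" and unbounded: "\<forall>x. \<exists>k. x < round_start k"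
  obtains k where "round_start k \<le> \<tau>" "\<tau> < round_start (Suc k)"
proof -
  define k where "k = (LEAST k. \<tau> < round_start k) - 1"
  have "\<tau> < round_start (LEAST k. \<tau> < round_start k)" by (rule LeastI_ex) (use unbounded in blast)
  moreover have "(LEAST k. \<tau> < round_start k) \<noteq> 0"
  proof
    assume "(LEAST k. \<tau> < round_start k) = 0"
    with calculation \<open>0 \<le> \<tau>\<close> show False by (simp add: round_start_0)
  qed
  ultimately have "\<tau> < round_start (Suc k)" unfolding k_def by simp
  moreover have "\<not> \<tau> < round_start k"
    unfolding k_def by (rule not_less_Least) (use \<open>(LEAST k. \<tau> < round_start k) \<noteq> 0\<close> in simp)
  ultimately show ?thesis using that[of k] by simp
qed

lemma height_le_window:
  assumes "visited_every v K" "v < n" "0 \<le> \<tau>" and unbounded: "\<forall>x. \<exists>k. x < round_start k"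
  shows "height h t W v \<tau> \<le> h v * ((real K + 1) * ((3 * real s + 1) * D))"
proof (rule height_le_gap)
  show "0 \<le> h v" using bgt_rate_pos[OF inst \<open>v < n\<close>] by simp
  let ?R = "(3 * real s + 1) * D"
  obtain k where before: "round_start k \<le> \<tau>" and after: "\<tau> < round_start (Suc k)"
    using last_round_before[OF \<open>0 \<le> \<tau>\<close> unbounded] .
  show "\<tau> \<le> (real K + 1) * ?R \<or>
      (\<exists>m. W m = v \<and> \<tau> - (real K + 1) * ?R \<le> arrival t W m \<and> arrival t W m \<le> \<tau>)"
  proof (cases "K \<le> k")
    case True
    obtain m where m: "W m = v" "round_start (k - K) \<le> arrival t W m" "arrival t W m \<le> round_start k"
      using visit_in_window[OF assms(1), of "k - K"] True by auto
    have "round_start (Suc k) \<le> round_start (k - K) + real (Suc K) * ?R"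
      using round_start_add[of "k - K" "Suc K"] True by (simp add: Suc_diff_le)
    with m(2) after have "\<tau> - (real K + 1) * ?R \<le> arrival t W m" by (simp add: algebra_simps)
    with m(1,3) before show ?thesis by auto
  next
    case False
    have "round_start (Suc k) \<le> real (Suc k) * ?R" using round_start_add[of 0 "Suc k"] round_start_0 by simp
    moreover have "real (Suc k) * ?R \<le> (real K + 1) * ?R"
      using False D_pos by (intro mult_right_mono) auto
    ultimately show ?thesis using after by (intro disjI1) linarith
  qed
qed

end

section \<open>Comparison with the optimum\<close>

context algorithm3
begin

definition lower_bound :: "real \<Rightarrow> bool" where
  "lower_bound M \<longleftrightarrow> 0 \<le> M \<and> h 0 * D \<le> 2 * M \<and>
     (\<forall>i\<in>{1..s}. cls n h i \<noteq> {} \<longrightarrow> 2^(i-1) / (real n)^2 * tree_weight t (T i) \<le> M)"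

lemma lower_bound_of_walk:
  assumes "w \<in> robot_walks n" and MH: "MH n h t w \<le> ereal M"
  shows "lower_bound M"
proof -
  have w: "\<forall>k. w k < n" "w 0 = 0" using assms(1) unfolding robot_walks_def by auto
  have "2^(i-1) / (real n)^2 * tree_weight t (T i) \<le> M"
    if i: "i \<in> {1..s}" and nonempty: "cls n h i \<noteq> {}" for i
  proof (rule mst_weight_le_MH[OF inst w(1) MH cls_subset nonempty])
    show "0 < 2^(i-1) / (real n)^2" using two_le_n by simp
  qed (use mst[OF i nonempty] in \<open>auto simp: cls_def\<close>)
  with MH_bound_nonneg[OF _ MH] rate0_Dmax_le_MH[OF two_le_n inst w MH] two_le_n
  show ?thesis unfolding lower_bound_def by auto
qed

lemma one_le_log_n: "1 \<le> log 2 (real n)"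
  using two_le_n le_log_iff[of 2 "real n" 1] by simp

lemma round_factor_le: "3 * real s + 1 \<le> 10 * log 2 (real n)"
proof -
  have "real s = of_int \<lceil>2 * log 2 (real n)\<rceil>" using one_le_log_n by (simp add: alg_s_def)
  moreover have "of_int \<lceil>2 * log 2 (real n)\<rceil> < 2 * log 2 (real n) + 1" by linarith
  ultimately show ?thesis using one_le_log_n by linarith
qed

lemma rate_Dmax_le: "lower_bound M \<Longrightarrow> v < n \<Longrightarrow> h v * D \<le> 2 * M"
proof -
  assume "lower_bound M" "v < n"
  then have "h v * D \<le> h 0 * D"
    using bgt_rate_antimono[OF inst, of 0 v] D_pos by (intro mult_right_mono) auto
  with \<open>lower_bound M\<close> show ?thesis unfolding lower_bound_def by simp
qed

lemma Dmax_le_lower_bound: "lower_bound M \<Longrightarrow> D \<le> 2 * M * real n"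
proof -
  assume "lower_bound M"
  have n: "0 < real n" using two_le_n by simp
  have "D / real n \<le> h 0 * D"
    using mult_right_mono[OF bgt_rate0_ge[OF inst rates_sum], of D] D_pos two_le_n by simp
  also have "\<dots> \<le> 2 * M" using \<open>lower_bound M\<close> unfolding lower_bound_def by simp
  finally show ?thesis using n by (simp add: field_simps)
qed

lemma window_V0:
  assumes "v \<in> V0"
  shows "visited_every v (card V0)"
    and "lower_bound M \<Longrightarrow> h v * ((real (card V0) + 1) * D) \<le> 10 * M"
proof -
  have nonempty: "V0 \<noteq> {}" using assms by auto
  then have "0 < card V0" using finite_cls0[of n h] by (simp add: card_gt_0_iff)
  have "v \<in> e ` {..<card V0}" using assms enum by (simp add: bij_betw_def)
  then obtain j0 where j0: "j0 < card V0" "e j0 = v" by auto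
  show "visited_every v (card V0)" unfolding visited_every_def
  proof
    fix k
    have "j0 \<in> (\<lambda>q. (k + q) mod card V0) ` {..<card V0}"
      using shift_mod_image[OF \<open>0 < card V0\<close>] j0 by simp
    then obtain q where q: "q < card V0" "(k + q) mod card V0 = j0" by auto
    then have "v \<in> set (round_seq (k + q))"
      unfolding round_seq_eq using idx_eq[OF nonempty] nonempty j0 by simp
    with q show "\<exists>j. k \<le> j \<and> j < k + card V0 \<and> v \<in> set (round_seq j)"
      by (intro exI[of _ "k + q"]) auto
  qed
  assume lb: "lower_bound M"
  have M: "0 \<le> M" using lb unfolding lower_bound_def by simp
  have n: "0 < real n" "2 \<le> real n" using two_le_n by auto
  have "h v \<le> 1 / (real n)^2" using assms unfolding cls0_def by simp
  moreover have "0 \<le> h v" using assms bgt_rate_pos[OF inst] cls0_subset[of n h] by (simp add: subset_iff less_imp_le)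
  moreover have "real (card V0) \<le> real n"
    using card_mono[OF _ cls0_subset[of n h]] by simp
  ultimately have "h v * ((real (card V0) + 1) * D) \<le> 1 / (real n)^2 * ((real n + 1) * (2 * M * real n))"
    using Dmax_le_lower_bound[OF lb] D_pos M n by (intro mult_mono) auto
  also have "\<dots> = 2 * M * ((real n + 1) / real n)" using n by (simp add: field_simps power2_eq_square)
  also have "\<dots> \<le> 2 * M * 2" using n M by (intro mult_left_mono) (auto simp: field_simps)
  finally show "h v * ((real (card V0) + 1) * D) \<le> 10 * M" using M by simp
qed

context
  fixes i v assumes i: "i \<in> {1..s}" and v: "v \<in> cls n h i"
begin

lemma cls_nonempty: "cls n h i \<noteq> {}"
  using v by auto

lemma window_single:
  assumes "card (cls n h i) = 1"
  shows "visited_every v 1"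
    and "lower_bound M \<Longrightarrow> h v * ((real 1 + 1) * D) \<le> 10 * M"
proof -
  have "v \<in> set (round_seq k)" for k
    using phase_single[OF i cls_nonempty assms, of k] phase_subset_round[OF i, of k] v by blast
  then show "visited_every v 1" unfolding visited_every_def by auto
  assume lb: "lower_bound M"
  then have "0 \<le> M" unfolding lower_bound_def by simp
  moreover have "v < n" using v cls_subset[of n h i] by blast
  ultimately show "h v * ((real 1 + 1) * D) \<le> 10 * M" using rate_Dmax_le[OF lb, of v] by simp
qed

context
  assumes several: "2 \<le> card (cls n h i)"
begin

definition tour_window :: nat where
  "tour_window = nat \<lceil>tour_total t (C i) / D\<rceil> + 1"

lemma tour_total_pos: "0 < tour_total t (C i)"
  using tour_total_eq[OF i cls_nonempty several]
    tree_weight_pos[OF inst cls_subset spanning[OF i cls_nonempty] several] by simp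

lemma tour_window_bounds:
  "tour_total t (C i) < real tour_window * D \<and> real tour_window + 1 \<le> tour_total t (C i) / D + 3"
proof -
  let ?L = "tour_total t (C i)" and ?c = "of_int \<lceil>tour_total t (C i) / D\<rceil> :: real"
  have window: "real tour_window = ?c + 1"
    unfolding tour_window_def using tour_total_pos D_pos by simp
  have "?L = ?L / D * D" using D_pos by simp
  also have "\<dots> \<le> ?c * D" using D_pos by (intro mult_right_mono) auto
  also have "\<dots> < (?c + 1) * D" using D_pos by simp
  finally show ?thesis unfolding window by linarith
qed

lemma window_tour: "visited_every v tour_window"
  unfolding visited_every_def
proof
  fix k
  have "\<exists>j q. k \<le> j \<and> j < k + tour_window \<and> q < steps i j \<and> C i ! ((pos j i + q) mod length (C i)) = v"
  proof (rule tour_phases_cover[where p = "\<lambda>k. pos k i" and r = "steps i" and D = D])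
    show "C i \<noteq> []" "v \<in> set (C i)" using tour_set[OF i cls_nonempty] v by simp_all
    show "\<forall>k<length (C i). 0 \<le> tour_step_len t (C i) k"
      using tour_point_less[OF i cls_nonempty] tour_set[OF i cls_nonempty]
      unfolding tour_step_len_def by (auto intro!: tt_nonneg[OF inst])
    show "\<forall>k. pos (Suc k) i = (pos k i + steps i k) mod length (C i)"
      using pos_Suc_tour[OF i cls_nonempty several] by blast
    show "\<forall>k. D \<le> tour_len t (C i) (pos k i) (steps i k)"
      using steps_advance[OF i cls_nonempty several] by blast
    show "tour_total t (C i) < real tour_window * D" using tour_window_bounds by simp
  qed
  then obtain j q where j: "k \<le> j" "j < k + tour_window" "q < steps i j"
    and "C i ! ((pos j i + q) mod length (C i)) = v" by blast
  then have "v \<in> set (phase j i)" unfolding phase_tour[OF i cls_nonempty several] by force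
  with j phase_subset_round[OF i] show "\<exists>j. k \<le> j \<and> j < k + tour_window \<and> v \<in> set (round_seq j)"
    by blast
qed

text \<open>The bamboos of class \<open>i\<close> grow at rate at most \<open>2\<^sup>i/n\<^sup>2\<close>, while the minimum spanning tree of
  the class weighs at most \<open>M n\<^sup>2 / 2\<^sup>i\<^sup>-\<^sup>1\<close>; the tour is twice that tree.\<close>

lemma window_tour_bound:
  assumes lb: "lower_bound M"
  shows "h v * ((real tour_window + 1) * D) \<le> 10 * M"
proof -
  define l where "l = 2^(i-1) / (real n)^2"
  have "l * tree_weight t (T i) \<le> M" using lb i cls_nonempty unfolding lower_bound_def l_def by blast
  moreover have "h v \<le> 2 * l"
    using v i unfolding cls_def l_def by (cases i) auto
  moreover have "0 \<le> h v" using bgt_rate_pos[OF inst] v cls_subset[of n h i] by force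
  moreover have "0 \<le> tree_weight t (T i)"
    using tour_total_eq[OF i cls_nonempty several] tour_total_pos by simp
  ultimately have "h v * tree_weight t (T i) \<le> 2 * l * tree_weight t (T i)"
    by (intro mult_right_mono)
  with \<open>l * tree_weight t (T i) \<le> M\<close> have "h v * tree_weight t (T i) \<le> 2 * M" by simp
  then have "h v * tour_total t (C i) \<le> 4 * M"
    using tour_total_eq[OF i cls_nonempty several] by simp
  moreover have "h v * ((real tour_window + 1) * D) \<le> h v * ((tour_total t (C i) / D + 3) * D)"
    using tour_window_bounds D_pos \<open>0 \<le> h v\<close> by (intro mult_left_mono mult_right_mono) auto
  moreover have "h v * ((tour_total t (C i) / D + 3) * D) = h v * tour_total t (C i) + 3 * (h v * D)"
    using D_pos by (simp add: field_simps)
  moreover have "v < n" using v cls_subset[of n h i] by blast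
  ultimately show ?thesis using rate_Dmax_le[OF lb, of v] by linarith
qed

end

end

lemma window_exists:
  assumes "v < n"
  shows "\<exists>K. visited_every v K \<and> (\<forall>M. lower_bound M \<longrightarrow> h v * ((real K + 1) * D) \<le> 10 * M)"
proof (cases "v \<in> V0")
  case True
  with window_V0 show ?thesis by blast
next
  case False
  then obtain i where i: "i \<in> {1..s}" "v \<in> cls n h i"
    using cls_cover[OF two_le_n inst rates_sum assms] by blast
  show ?thesis
  proof (cases "card (cls n h i) = 1")
    case True
    with window_single[OF i] show ?thesis by blast
  next
    case False
    with two_le_card[OF i(1) cls_nonempty[OF i]] window_tour[OF i] window_tour_bound[OF i]
    show ?thesis by blast
  qed
qed

lemma MH_le_lower_bound:
  assumes "lower_bound M"
  shows "MH n h t W \<le> ereal (100 * log 2 (real n) * M)"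
proof (rule MH_leI)
  obtain K0 K1 where "visited_every 0 K0" "visited_every 1 K1"
    using window_exists[of 0] window_exists[of 1] two_le_n by auto
  then have "visited_every 0 (K0 + K1)" "visited_every 1 (K0 + K1)"
    by (auto elim: visited_every_mono)
  then have unbounded: "\<forall>x. \<exists>k. x < round_start k" using round_start_unbounded by blast
  fix v :: nat and \<tau> :: real assume "v < n" "0 \<le> \<tau>"
  then obtain K where "visited_every v K" and K: "h v * ((real K + 1) * D) \<le> 10 * M"
    using window_exists assms by blast
  have "height h t W v \<tau> \<le> (3 * real s + 1) * (h v * ((real K + 1) * D))"
    using height_le_window[OF \<open>visited_every v K\<close> \<open>v < n\<close> \<open>0 \<le> \<tau>\<close> unbounded] by (simp add: algebra_simps)
  also have "\<dots> \<le> (10 * log 2 (real n)) * (10 * M)"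
    using bgt_rate_pos[OF inst \<open>v < n\<close>] D_pos one_le_log_n
    by (intro mult_mono[OF round_factor_le K]) auto
  finally show "height h t W v \<tau> \<le> 100 * log 2 (real n) * M" by simp
qed

end

lemma ereal_le_mult_INF:
  fixes f :: "'a \<Rightarrow> ereal"
  assumes a: "0 < a" and nonneg: "0 \<le> (INF w\<in>S. f w)"
    and bound: "\<And>w M. w \<in> S \<Longrightarrow> f w \<le> ereal M \<Longrightarrow> x \<le> ereal (a * M)"
  shows "x \<le> ereal a * (INF w\<in>S. f w)"
proof (cases "INF w\<in>S. f w" rule: ereal_cases)
  case (real m)
  show ?thesis
  proof (rule ereal_le_epsilon2)
    fix \<epsilon> :: real assume "0 < \<epsilon>"
    with real a have "(INF w\<in>S. f w) < ereal (m + \<epsilon> / a)" by simp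
    then obtain w where "w \<in> S" "f w < ereal (m + \<epsilon> / a)" by (auto simp: INF_less_iff)
    then have "x \<le> ereal (a * (m + \<epsilon> / a))" using bound less_imp_le by blast
    also have "a * (m + \<epsilon> / a) = a * m + \<epsilon>" using a by (simp add: field_simps)
    finally show "x \<le> ereal a * (INF w\<in>S. f w) + ereal \<epsilon>" using real by simp
  qed
qed (use a nonneg in auto)

theorem theorem6:
  shows "\<exists>c>0. \<forall>(n::nat) (h::nat \<Rightarrow> real) (t::nat \<Rightarrow> nat \<Rightarrow> real)
            (T::nat \<Rightarrow> (nat \<times> nat) set) (C::nat \<Rightarrow> nat list) (p0::nat \<Rightarrow> nat) (e::nat \<Rightarrow> nat).
     2 \<le> n \<and> bgt_instance n h t \<and> (\<Sum>i<n. h i) = 1 \<and>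
     (\<forall>i\<in>{1..alg_s n}. cls n h i \<noteq> {} \<longrightarrow>
        min_spanning_tree t (cls n h i) (T i) \<and> euler_tour (cls n h i) (T i) (C i) \<and>
        p0 i < length (C i)) \<and>
     bij_betw e {..<card (cls0 n h)} (cls0 n h)
     \<longrightarrow> MH n h t (alg_walk n h t C p0 e) \<le> ereal (c * log 2 (real n)) * OPT n h t"
proof (intro exI[of _ "100::real"] conjI allI impI)
  fix n h t T C p0 e
  assume "2 \<le> n \<and> bgt_instance n h t \<and> (\<Sum>i<n. h i) = 1 \<and>
     (\<forall>i\<in>{1..alg_s n}. cls n h i \<noteq> {} \<longrightarrow>
        min_spanning_tree t (cls n h i) (T i) \<and> euler_tour (cls n h i) (T i) (C i) \<and>
        p0 i < length (C i)) \<and>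
     bij_betw e {..<card (cls0 n h)} (cls0 n h)"
  then interpret algorithm3 n h t T C p0 e
    by unfold_locales auto
  show "MH n h t (alg_walk n h t C p0 e) \<le> ereal (100 * log 2 (real n)) * OPT n h t"
    unfolding OPT_def
  proof (rule ereal_le_mult_INF)
    show "0 < 100 * log 2 (real n)" using one_le_log_n by simp
    show "0 \<le> (INF w\<in>robot_walks n. MH n h t w)" using MH_nonneg two_le_n by (simp add: le_INF_iff)
    fix w M assume "w \<in> robot_walks n" "MH n h t w \<le> ereal M"
    then show "MH n h t W \<le> ereal (100 * log 2 (real n) * M)"
      by (intro MH_le_lower_bound lower_bound_of_walk)
  qed
qed simp

end
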